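(* Let $H$ be a connected hypergraph, let $u_1,u_2$ be two distinct vertices of $H$, and let $G_{r_1},G_{r_2}$ be connected rooted hypergraphs with roots $r_1,r_2$, each having at least one edge, vertex-disjoint from $H$ and from each other. Let $H_1$ be obtained from $H$ by identifying both $r_1$ and $r_2$ with $u_1$, and $H_2$ be obtained from $H$ by identifying $r_1$ with $u_1$ and $r_2$ with $u_2$. Then $\rho(H_2)>\rho(H_1)$ if one of the following holds: (1) $d_H(u_1)=d_H(u_2)=d_H(u_1,u_2)=1$; (2) $\sigma_{H_1}(V'(G_{r_1}))+x_{u_1}\ge \sigma_{H_1}(V(H))$, where $\mathbf{x}=\mathbf{x}(H_1)$.
   Context: For a connected hypergraph $G$, $d_G(u,v)$ is the length of a shortest path between $u$ and $v$ (a path being a sequence $(v_0,e_1,v_1,\dots,e_p,v_p)$ with $v_{i-1},v_i\in e_i$, $v_{i-1}\ne v_i$, all $v_i,e_i$ distinct, of length $p$), $d_G(v)$ is the number of edges containing $v$, $D(G)=(d_G(u,v))$ is the distance matrix and $\rho(G)$ is its largest eigenvalue. The distance Perron vector $\mathbf{x}(G)$ is the unique positive unit eigenvector of $D(G)$ for $\rho(G)$, and $x_v$ is its entry at $v$. For $X\subseteq V(G)$, $\sigma_G(X)$ is the sum of the entries of $\mathbf{x}(G)$ over $X$. $V'(G_{r_1})$ denotes the set of vertices of the copy of $G_{r_1}$ in $H_1$ other than its root (identified with $u_1$); $V(H)$ is regarded as a subset of $V(H_1)$. *)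

theory Defs
  imports Complex_Main
begin

definition hypergraph :: "'a set \<Rightarrow> 'a set set \<Rightarrow> bool" where
  "hypergraph V E \<longleftrightarrow> finite V \<and> (\<forall>e\<in>E. e \<subseteq> V \<and> card e \<ge> 2)"

definition hpath :: "'a set set \<Rightarrow> 'a list \<Rightarrow> 'a set list \<Rightarrow> bool" where
  "hpath E vs es \<longleftrightarrow> length vs = length es + 1 \<and> distinct vs \<and> distinct es \<and>
     (\<forall>i < length es. es ! i \<in> E \<and> vs ! i \<in> es ! i \<and> vs ! Suc i \<in> es ! i
                      \<and> vs ! i \<noteq> vs ! Suc i)"

definition hconnected :: "'a set \<Rightarrow> 'a set set \<Rightarrow> bool" where
  "hconnected V E \<longleftrightarrow> (\<forall>u\<in>V. \<forall>v\<in>V. \<exists>vs es. hpath E vs es \<and> hd vs = u \<and> last vs = v)"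

definition hdist :: "'a set set \<Rightarrow> 'a \<Rightarrow> 'a \<Rightarrow> nat" where
  "hdist E u v = (LEAST p. \<exists>vs es. hpath E vs es \<and> hd vs = u \<and> last vs = v \<and> length es = p)"

definition hdeg :: "'a set set \<Rightarrow> 'a \<Rightarrow> nat" where
  "hdeg E v = card {e\<in>E. v \<in> e}"

definition dist_eigenpair :: "'a set \<Rightarrow> 'a set set \<Rightarrow> real \<Rightarrow> ('a \<Rightarrow> real) \<Rightarrow> bool" where
  "dist_eigenpair V E lam x \<longleftrightarrow> (\<forall>v. v \<notin> V \<longrightarrow> x v = 0) \<and> (\<exists>v\<in>V. x v \<noteq> 0) \<and>
     (\<forall>u\<in>V. (\<Sum>v\<in>V. real (hdist E u v) * x v) = lam * x u)"

definition dist_rho :: "'a set \<Rightarrow> 'a set set \<Rightarrow> real" where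
  "dist_rho V E = Max {lam. \<exists>x. dist_eigenpair V E lam x}"

definition perron :: "'a set \<Rightarrow> 'a set set \<Rightarrow> 'a \<Rightarrow> real" where
  "perron V E = (THE x. dist_eigenpair V E (dist_rho V E) x \<and> (\<forall>v\<in>V. x v > 0)
                       \<and> (\<Sum>v\<in>V. (x v)\<^sup>2) = 1)"

definition sigma :: "'a set \<Rightarrow> 'a set set \<Rightarrow> 'a set \<Rightarrow> real" where
  "sigma V E X = (\<Sum>v\<in>X. perron V E v)"

definition subst_root :: "'a \<Rightarrow> 'a \<Rightarrow> 'a \<Rightarrow> 'a" where
  "subst_root r u x = (if x = r then u else x)"

definition glue2_V :: "'a set \<Rightarrow> 'a set \<Rightarrow> 'a \<Rightarrow> 'a \<Rightarrow> 'a set \<Rightarrow> 'a \<Rightarrow> 'a \<Rightarrow> 'a set" where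
  "glue2_V VH V1 r1 w1 V2 r2 w2 = VH \<union> subst_root r1 w1 ` V1 \<union> subst_root r2 w2 ` V2"

definition glue2_E :: "'a set set \<Rightarrow> 'a set set \<Rightarrow> 'a \<Rightarrow> 'a \<Rightarrow> 'a set set \<Rightarrow> 'a \<Rightarrow> 'a \<Rightarrow> 'a set set" where
  "glue2_E EH E1 r1 w1 E2 r2 w2 = EH \<union> (\<lambda>e. subst_root r1 w1 ` e) ` E1 \<union> (\<lambda>e. subst_root r2 w2 ` e) ` E2"

end

(*
  Write W for the common vertex set of H1 and H2. Distances in a hypergraph glued at a cut
  vertex add up, so D(H1) and D(H2) differ only between the pendant G2 and the rest of W,
  where the attachment vertex u1 is replaced by u2. Since the distance spectral radius is the
  maximum of the Rayleigh quotient, rho(H2) - rho(H1) >= x^T (D(H2) - D(H1)) x for the Perron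
  vector x of H1, and this quantity is 2 sigma(V'(G2)) times the sum, over the vertices q
  outside G2, of (d(u2,q') - d(u1,q')) x_q, where q' is the vertex of H at which q hangs.
  Under (2) the triangle inequality bounds this sum below by d(u1,u2) x_u1 > 0. Under (1)
  u1 and u2 are twins of H; if rho did not increase, the same estimate for x and for x with
  the entries at u1 and u2 exchanged would give sigma(V'(G_i)) <= x_u2 - x_u1 for i = 1, 2,
  contradicting the eigenequations of x at u1 and u2.
*)
theory Submission
  imports Defs "Jordan_Normal_Form.Char_Poly" "HOL-Analysis.Function_Topology"
    "HOL-Combinatorics.Transposition"
begin

section \<open>Walks and distances in hypergraphs\<close>

definition hadj :: "'a set set \<Rightarrow> 'a \<Rightarrow> 'a \<Rightarrow> bool" where
  "hadj E a b \<longleftrightarrow> (\<exists>e\<in>E. a \<in> e \<and> b \<in> e \<and> a \<noteq> b)"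

lemma relpowp_map:
  assumes "\<And>a b. P a b \<Longrightarrow> Q (f a) (f b)"
  shows "(P ^^ n) u v \<Longrightarrow> (Q ^^ n) (f u) (f v)"
proof (induction n arbitrary: v)
  case (Suc n)
  then obtain w where "(P ^^ n) u w" "P w v" by auto
  with Suc.IH assms show ?case by (meson relpowp_Suc_I)
qed simp

lemma relpowp_increment_le:
  fixes f :: "'a \<Rightarrow> nat"
  assumes "\<And>a b. P a b \<Longrightarrow> f b \<le> f a + 1"
  shows "(P ^^ n) u v \<Longrightarrow> f v \<le> f u + n"
proof (induction n arbitrary: v)
  case (Suc n)
  then obtain w where "(P ^^ n) u w" "P w v" by auto
  with Suc.IH assms show ?case by fastforce
qed simp

lemma relpowp_sym:
  assumes "\<And>a b. P a b \<Longrightarrow> P b a"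
  shows "(P ^^ n) u v \<Longrightarrow> (P ^^ n) v u"
proof (induction n arbitrary: v)
  case (Suc n)
  then obtain w where "(P ^^ n) u w" "P w v" by auto
  with Suc.IH assms show ?case by (meson relpowp_Suc_I2)
qed simp

lemma hadj_sym: "hadj E a b \<Longrightarrow> hadj E b a"
  unfolding hadj_def by blast

lemma walk_sym: "(hadj E ^^ n) u v \<Longrightarrow> (hadj E ^^ n) v u"
  by (rule relpowp_sym[OF hadj_sym])

lemma hpath_length: "hpath E vs es \<Longrightarrow> length vs = Suc (length es)"
  by (simp add: hpath_def)

lemma hpath_last: "hpath E vs es \<Longrightarrow> last vs = vs ! length es"
  using hpath_length[of E vs es] by (cases vs rule: rev_cases) (auto simp: nth_append)

lemma hpath_walk:
  assumes "hpath E vs es"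
  shows "(hadj E ^^ length es) (hd vs) (last vs)"
proof -
  have "vs \<noteq> []" using hpath_length[OF assms] by auto
  then have "hd vs = vs ! 0" "last vs = vs ! length es"
    by (simp_all add: hd_conv_nth hpath_last[OF assms])
  moreover have "\<forall>i < length es. hadj E (vs ! i) (vs ! Suc i)"
    using assms unfolding hpath_def hadj_def by blast
  ultimately show ?thesis by (auto simp: relpowp_fun_conv)
qed

lemma hpath_take:
  assumes "hpath E vs es" "k \<le> length es"
  shows "hpath E (take (Suc k) vs) (take k es)"
  using assms unfolding hpath_def by auto

lemma hpath_snoc:
  assumes "hpath E vs es" "e \<in> E" "last vs \<in> e" "v \<in> e" "v \<notin> set vs" "e \<notin> set es"
  shows "hpath E (vs @ [v]) (es @ [e])"
proof -
  have len: "length vs = Suc (length es)" by (rule hpath_length[OF assms(1)])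
  moreover have "last vs \<in> set vs" using len by (cases vs) auto
  ultimately show ?thesis
    using hpath_last[OF assms(1)] assms unfolding hpath_def by (auto simp: nth_append less_Suc_eq)
qed

lemma hpath_edge_cut:
  assumes "hpath E vs es" "last vs \<in> e"
  obtains k where "k \<le> length es" "e \<notin> set (take k es)" "vs ! k \<in> e"
proof (cases "e \<in> set es")
  case True
  then obtain k where k: "k < length es" "es ! k = e" by (auto simp: in_set_conv_nth)
  have "distinct es" "vs ! k \<in> es ! k" using assms(1) k(1) by (auto simp: hpath_def)
  then have "e \<notin> set (take k es)" "vs ! k \<in> e"
    using k by (auto simp: in_set_conv_nth nth_eq_iff_index_eq)
  with k show ?thesis by (intro that) simp_all
next
  case False
  with assms show ?thesis by (intro that[of "length es"]) (simp_all add: hpath_last)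
qed

lemma walk_hpath:
  assumes "(hadj E ^^ n) u v"
  shows "\<exists>vs es. hpath E vs es \<and> hd vs = u \<and> last vs = v \<and> length es \<le> n"
  using assms
proof (induction n arbitrary: v)
  case 0
  then have "hpath E [u] [] \<and> hd [u] = u \<and> last [u] = v" by (simp add: hpath_def)
  then show ?case by blast
next
  case (Suc n)
  then obtain w where "(hadj E ^^ n) u w" and wv: "hadj E w v" by auto
  with Suc.IH obtain vs es where P: "hpath E vs es" "hd vs = u" "last vs = w" "length es \<le> n"
    by blast
  have len: "length vs = Suc (length es)" by (rule hpath_length[OF P(1)])
  show ?case
  proof (cases "v \<in> set vs")
    case True
    then obtain k where k: "k < length vs" "vs ! k = v" by (auto simp: in_set_conv_nth)
    have "hpath E (take (Suc k) vs) (take k es)" using hpath_take[OF P(1)] k len by simp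
    moreover have "hd (take (Suc k) vs) = u" using P(2) by simp
    moreover have "last (take (Suc k) vs) = v" using k by (simp add: take_Suc_conv_app_nth)
    moreover have "length (take k es) \<le> Suc n" using P(4) by simp
    ultimately show ?thesis by blast
  next
    case False
    from wv obtain e where e: "e \<in> E" "w \<in> e" "v \<in> e" unfolding hadj_def by blast
    \<comment> \<open>cut the path just before the use of \<open>e\<close>, if any, and finish with \<open>e\<close>\<close>
    obtain k where k: "k \<le> length es" "e \<notin> set (take k es)" "vs ! k \<in> e"
      using hpath_edge_cut[OF P(1)] P(3) e(2) by blast
    let ?vs = "take (Suc k) vs @ [v]" and ?es = "take k es @ [e]"
    have "last (take (Suc k) vs) = vs ! k" using k(1) len by (simp add: take_Suc_conv_app_nth)
    then have "hpath E ?vs ?es"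
      using hpath_snoc[OF hpath_take[OF P(1) k(1)] e(1) _ e(3)] k False
      by (auto dest: in_set_takeD)
    moreover have "hd ?vs = u" using P(2) len by (cases vs) simp_all
    ultimately show ?thesis using P(4) k(1) by fastforce
  qed
qed

lemma hdist_le: "(hadj E ^^ n) u v \<Longrightarrow> hdist E u v \<le> n"
proof -
  assume "(hadj E ^^ n) u v"
  from walk_hpath[OF this] obtain vs es where "hpath E vs es" "hd vs = u" "last vs = v" "length es \<le> n"
    by blast
  then have "hdist E u v \<le> length es" unfolding hdist_def by (intro Least_le) blast
  with \<open>length es \<le> n\<close> show ?thesis by simp
qed

lemma hdist_walk: "(hadj E ^^ n) u v \<Longrightarrow> (hadj E ^^ hdist E u v) u v"
proof -
  assume "(hadj E ^^ n) u v"
  from walk_hpath[OF this]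
  have "\<exists>p vs es. hpath E vs es \<and> hd vs = u \<and> last vs = v \<and> length es = p" by blast
  then have "\<exists>vs es. hpath E vs es \<and> hd vs = u \<and> last vs = v \<and> length es = hdist E u v"
    unfolding hdist_def by (rule LeastI_ex)
  then obtain vs es where "hpath E vs es" "hd vs = u" "last vs = v" "length es = hdist E u v"
    by blast
  with hpath_walk[of E vs es] show ?thesis by simp
qed

lemma hdist_self: "hdist E u u = 0"
  using hdist_le[where n=0 and E=E and u=u and v=u] by simp

lemma hdist_eqI:
  fixes f :: "'a \<Rightarrow> nat"
  assumes "(hadj E ^^ f v) u v" "f u = 0" "\<And>a b. hadj E a b \<Longrightarrow> f b \<le> f a + 1"
  shows "hdist E u v = f v"
  using hdist_le[OF assms(1)] relpowp_increment_le[of "hadj E" f, OF assms(3) hdist_walk[OF assms(1)]] assms(2)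
  by simp

lemma hconnected_walk:
  assumes "hconnected V E" "u \<in> V" "v \<in> V"
  shows "(hadj E ^^ hdist E u v) u v"
proof -
  from assms obtain vs es where "hpath E vs es" "hd vs = u" "last vs = v"
    unfolding hconnected_def by blast
  with hpath_walk[of E vs es] show ?thesis by (metis hdist_walk)
qed

lemma hconnectedI:
  assumes "\<And>u v. u \<in> V \<Longrightarrow> v \<in> V \<Longrightarrow> \<exists>n. (hadj E ^^ n) u v"
  shows "hconnected V E"
  unfolding hconnected_def
proof (intro ballI)
  fix u v assume "u \<in> V" "v \<in> V"
  with assms obtain n where "(hadj E ^^ n) u v" by blast
  from walk_hpath[OF this] show "\<exists>vs es. hpath E vs es \<and> hd vs = u \<and> last vs = v" by blast
qed

lemma hdist_commute:
  "hconnected V E \<Longrightarrow> u \<in> V \<Longrightarrow> v \<in> V \<Longrightarrow> hdist E u v = hdist E v u"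
  using hconnected_walk[of V E u v] hconnected_walk[of V E v u]
  by (auto intro!: antisym hdist_le dest: walk_sym)

lemma hdist_triangle:
  "hconnected V E \<Longrightarrow> u \<in> V \<Longrightarrow> v \<in> V \<Longrightarrow> w \<in> V \<Longrightarrow>
    hdist E u w \<le> hdist E u v + hdist E v w"
  using hconnected_walk[of V E u v] hconnected_walk[of V E v w]
  by (intro hdist_le relpowp_trans) auto

lemma hdist_pos:
  "hconnected V E \<Longrightarrow> u \<in> V \<Longrightarrow> v \<in> V \<Longrightarrow> u \<noteq> v \<Longrightarrow> 0 < hdist E u v"
  using hconnected_walk[of V E u v] by (cases "hdist E u v") auto

lemma hdist_adj_le:
  "hconnected V E \<Longrightarrow> u \<in> V \<Longrightarrow> a \<in> V \<Longrightarrow> hadj E a b \<Longrightarrow> hdist E u b \<le> hdist E u a + 1"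
  using hdist_le[OF relpowp_Suc_I[OF hconnected_walk[of V E u a]]] by simp

lemma hadj_in: "hypergraph V E \<Longrightarrow> hadj E a b \<Longrightarrow> a \<in> V \<and> b \<in> V"
  unfolding hypergraph_def hadj_def by blast

lemma exists_nonroot: "hypergraph V E \<Longrightarrow> E \<noteq> {} \<Longrightarrow> \<exists>v\<in>V. v \<noteq> r"
proof -
  assume "hypergraph V E" "E \<noteq> {}"
  then obtain e where "e \<subseteq> V" "2 \<le> card e" unfolding hypergraph_def by blast
  then have "\<not> e \<subseteq> {r}" using card_mono[of "{r}" e] by auto
  with \<open>e \<subseteq> V\<close> show ?thesis by blast
qed

lemma sum_nonroot_pos:
  fixes x :: "'a \<Rightarrow> real"
  assumes "hypergraph V E" "E \<noteq> {}" "\<And>v. v \<in> V - {r} \<Longrightarrow> 0 < x v"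
  shows "0 < (\<Sum>v\<in>V - {r}. x v)"
proof (rule sum_pos)
  show "finite (V - {r})" using assms(1) unfolding hypergraph_def by simp
  show "V - {r} \<noteq> {}" using exists_nonroot[OF assms(1,2)] by blast
qed (rule assms(3))

lemma hdist_pendant_le:
  assumes "hconnected V E" "u \<in> V" "v \<in> V" "hdeg E u = 1" "e \<in> E" "u \<in> e" "v \<in> e"
    and q: "q \<in> V" "q \<noteq> u"
  shows "hdist E v q \<le> hdist E u q"
proof -
  have "{e' \<in> E. u \<in> e'} = {e}"
    using assms(4-6) unfolding hdeg_def by (metis (no_types, lifting) card_1_singletonE mem_Collect_eq singletonD)
  obtain m where "hdist E u q = Suc m"
    using hdist_pos[OF assms(1,2) q(1)] q(2) by (cases "hdist E u q") auto
  with hconnected_walk[OF assms(1,2) q(1)] obtain p where p: "hadj E u p" "(hadj E ^^ m) p q"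
    by (metis relpowp_Suc_E2)
  \<comment> \<open>the first step leaves \<open>u\<close> through its only edge \<open>e\<close>, which also contains \<open>v\<close>\<close>
  from p(1) \<open>{e' \<in> E. u \<in> e'} = {e}\<close> have "p \<in> e" unfolding hadj_def by blast
  show ?thesis
  proof (cases "p = v")
    case True
    with hdist_le[OF p(2)] \<open>hdist E u q = Suc m\<close> show ?thesis by simp
  next
    case False
    with \<open>p \<in> e\<close> assms(5,7) have "hadj E v p" unfolding hadj_def by blast
    from hdist_le[OF relpowp_Suc_I2[OF this p(2)]] \<open>hdist E u q = Suc m\<close> show ?thesis by simp
  qed
qed

lemma hdist_twins:
  assumes "hconnected V E" "u1 \<in> V" "u2 \<in> V" "hdeg E u1 = 1" "hdeg E u2 = 1" "hdist E u1 u2 = 1"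
    and q: "q \<in> V" "q \<noteq> u1" "q \<noteq> u2"
  shows "hdist E u1 q = hdist E u2 q"
proof -
  have "(hadj E ^^ 1) u1 u2" using hconnected_walk[OF assms(1-3)] assms(6) by simp
  then obtain e where "e \<in> E" "u1 \<in> e" "u2 \<in> e" unfolding hadj_def by auto
  then show ?thesis
    using hdist_pendant_le[OF assms(1,2,3,4) _ _ _ q(1,2)] hdist_pendant_le[OF assms(1,3,2,5) _ _ _ q(1,3)]
    by (simp add: antisym)
qed

lemma hdist_transpose_twins:
  assumes "hconnected V E" "u1 \<in> V" "u2 \<in> V" "hdeg E u1 = 1" "hdeg E u2 = 1" "hdist E u1 u2 = 1"
    and "a \<in> V" "b \<in> V"
  shows "hdist E (transpose u1 u2 a) (transpose u1 u2 b) = hdist E a b"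
proof -
  have one_side: "hdist E (transpose u1 u2 c) q = hdist E c q"
    if "c \<in> V" "q \<in> V" "q \<noteq> u1" "q \<noteq> u2" for c q
    using hdist_twins[OF assms(1-6) that(2-4)] by (auto simp: transpose_def)
  have comm: "hdist E c d = hdist E d c" if "c \<in> V" "d \<in> V" for c d
    using hdist_commute[OF assms(1) that] .
  show ?thesis
  proof (cases "b \<in> {u1, u2}")
    case b: True
    show ?thesis
    proof (cases "a \<in> {u1, u2}")
      case True
      with b show ?thesis using comm[OF assms(2,3)] by (auto simp: transpose_def hdist_self)
    next
      case False
      then have "transpose u1 u2 a = a" by (auto simp: transpose_def)
      moreover have "transpose u1 u2 b \<in> V" using b assms(2,3) by (auto simp: transpose_def)
      moreover have "hdist E (transpose u1 u2 b) a = hdist E b a"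
        using one_side[OF assms(8,7)] False by simp
      ultimately show ?thesis
        using comm[of a "transpose u1 u2 b"] comm[OF assms(7,8)] assms(7) by simp
    qed
  next
    case False
    then have "transpose u1 u2 b = b" by (auto simp: transpose_def)
    with one_side[OF assms(7,8)] False show ?thesis by simp
  qed
qed

section \<open>Gluing a rooted hypergraph onto a vertex\<close>

definition collapse :: "'a set \<Rightarrow> 'a \<Rightarrow> 'a \<Rightarrow> 'a" where
  "collapse X c p = (if p \<in> X then c else p)"

definition retract :: "'a set \<Rightarrow> 'a \<Rightarrow> 'a \<Rightarrow> 'a" where
  "retract X c p = (if p \<in> X then p else c)"

definition glue_V :: "'a set \<Rightarrow> 'a set \<Rightarrow> 'a \<Rightarrow> 'a \<Rightarrow> 'a set" where
  "glue_V VH VG r w = VH \<union> subst_root r w ` VG"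

definition glue_E :: "'a set set \<Rightarrow> 'a set set \<Rightarrow> 'a \<Rightarrow> 'a \<Rightarrow> 'a set set" where
  "glue_E EH EG r w = EH \<union> (\<lambda>e. subst_root r w ` e) ` EG"

lemma glue2_V_eq: "glue2_V VH V1 r1 w1 V2 r2 w2 = glue_V (glue_V VH V1 r1 w1) V2 r2 w2"
  by (simp add: glue2_V_def glue_V_def)

lemma glue2_E_eq: "glue2_E EH E1 r1 w1 E2 r2 w2 = glue_E (glue_E EH E1 r1 w1) E2 r2 w2"
  by (simp add: glue2_E_def glue_E_def)

lemma glue2_E_commute: "glue2_E EH E1 r1 a E2 r2 b = glue2_E EH E2 r2 b E1 r1 a"
  unfolding glue2_E_def by blast

lemma retract_collapse:
  "c \<notin> X \<Longrightarrow> X \<inter> Y = {} \<Longrightarrow> retract X r (collapse Y c p) = retract X r p"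
  unfolding retract_def collapse_def by auto

locale rooted_glue =
  fixes VH :: "'a set" and EH :: "'a set set" and VG :: "'a set" and EG :: "'a set set"
    and r w :: 'a
  assumes H: "hypergraph VH EH" "hconnected VH EH"
    and G: "hypergraph VG EG" "hconnected VG EG" "r \<in> VG"
    and w: "w \<in> VH"
    and disj: "VH \<inter> VG = {}"
begin

abbreviation "s \<equiv> subst_root r w"
abbreviation "projG \<equiv> retract (VG - {r}) r"
abbreviation "projH \<equiv> collapse (VG - {r}) w"

lemma glue_V_eq: "glue_V VH VG r w = VH \<union> (VG - {r})"
  using G(3) w unfolding glue_V_def subst_root_def by auto

lemma inj_on_s: "inj_on s VG"
  using w disj unfolding inj_on_def subst_root_def by auto

lemma projG_s: "a \<in> VG \<Longrightarrow> projG (s a) = a"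
  and projH_s: "a \<in> VG \<Longrightarrow> projH (s a) = w"
  and projG_H: "p \<in> VH \<Longrightarrow> projG p = r"
  and projH_H: "p \<in> VH \<Longrightarrow> projH p = p"
  using w disj unfolding collapse_def retract_def subst_root_def by auto

lemma proj_in:
  assumes "p \<in> glue_V VH VG r w"
  shows "projG p \<in> VG" "projH p \<in> VH"
  using assms G(3) w unfolding glue_V_eq collapse_def retract_def by auto

lemma hypergraph_glue: "hypergraph (glue_V VH VG r w) (glue_E EH EG r w)"
proof -
  have "finite (glue_V VH VG r w)"
    using H(1) G(1) unfolding glue_V_eq hypergraph_def by simp
  moreover have "e \<subseteq> glue_V VH VG r w \<and> 2 \<le> card e" if "e \<in> glue_E EH EG r w" for e
  proof -
    from that consider "e \<in> EH" | e0 where "e0 \<in> EG" "e = s ` e0"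
      unfolding glue_E_def by blast
    then show ?thesis
    proof cases
      case 1
      then show ?thesis using H(1) unfolding hypergraph_def glue_V_def by blast
    next
      case 2
      then have "e0 \<subseteq> VG" "2 \<le> card e0" using G(1) unfolding hypergraph_def by auto
      moreover have "card (s ` e0) = card e0"
        using inj_on_subset[OF inj_on_s \<open>e0 \<subseteq> VG\<close>] by (rule card_image)
      ultimately show ?thesis using 2 unfolding glue_V_def by auto
    qed
  qed
  ultimately show ?thesis unfolding hypergraph_def by blast
qed

lemma hadj_glueE:
  assumes "hadj (glue_E EH EG r w) a b"
  obtains "hadj EH a b" | a0 b0 where "hadj EG a0 b0" "a = s a0" "b = s b0"
proof -
  from assms obtain e where e: "e \<in> glue_E EH EG r w" "a \<in> e" "b \<in> e" "a \<noteq> b"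
    unfolding hadj_def by blast
  show thesis
  proof (cases "e \<in> EH")
    case True
    with e show thesis using that(1) unfolding hadj_def by blast
  next
    case False
    with e(1) obtain e0 where "e0 \<in> EG" "e = s ` e0" unfolding glue_E_def by blast
    with e obtain a0 b0 where "a0 \<in> e0" "b0 \<in> e0" "a = s a0" "b = s b0" by blast
    with \<open>e0 \<in> EG\<close> e(4) show thesis using that(2) unfolding hadj_def by blast
  qed
qed

lemma walk_glue_H: "(hadj EH ^^ n) a b \<Longrightarrow> (hadj (glue_E EH EG r w) ^^ n) a b"
  using relpowp_map[of "hadj EH" "hadj (glue_E EH EG r w)" "\<lambda>x. x"]
  unfolding hadj_def glue_E_def by blast

lemma walk_glue_G: "(hadj EG ^^ n) a b \<Longrightarrow> (hadj (glue_E EH EG r w) ^^ n) (s a) (s b)"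
proof (erule relpowp_map[rotated])
  fix a b assume "hadj EG a b"
  then obtain e where e: "e \<in> EG" "a \<in> e" "b \<in> e" "a \<noteq> b" unfolding hadj_def by blast
  then have "s a \<noteq> s b" using G(1) inj_on_s unfolding hypergraph_def inj_on_def by blast
  with e show "hadj (glue_E EH EG r w) (s a) (s b)" unfolding hadj_def glue_E_def by blast
qed

lemma dist_glue_increment:
  assumes p: "p \<in> glue_V VH VG r w" and ab: "hadj (glue_E EH EG r w) a b"
  shows "hdist EG (projG p) (projG b) + hdist EH (projH p) (projH b)
    \<le> hdist EG (projG p) (projG a) + hdist EH (projH p) (projH a) + 1"
  using ab
proof (cases rule: hadj_glueE)
  case 1
  then have "a \<in> VH" "b \<in> VH" using hadj_in[OF H(1)] by blast+
  with hdist_adj_le[OF H(2) proj_in(2)[OF p] \<open>a \<in> VH\<close> 1] show ?thesis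
    by (simp add: projG_H projH_H)
next
  case (2 a0 b0)
  then have "a0 \<in> VG" "b0 \<in> VG" using hadj_in[OF G(1)] by blast+
  with hdist_adj_le[OF G(2) proj_in(1)[OF p] \<open>a0 \<in> VG\<close> 2(1)] 2(2,3) show ?thesis
    by (simp add: projG_s projH_s)
qed

lemma walk_glue_to_hub:
  assumes "p \<in> glue_V VH VG r w"
  shows "(hadj (glue_E EH EG r w) ^^ hdist EG (projG p) r) p (projH p)"
proof (cases "p \<in> VG - {r}")
  case True
  then have "(hadj (glue_E EH EG r w) ^^ hdist EG p r) (s p) (s r)"
    using walk_glue_G[OF hconnected_walk[OF G(2)]] G(3) by blast
  with True show ?thesis by (simp add: collapse_def retract_def subst_root_def)
next
  case False
  then show ?thesis by (auto simp: collapse_def retract_def hdist_self)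
qed

lemma walk_glue:
  assumes p: "p \<in> glue_V VH VG r w" and q: "q \<in> glue_V VH VG r w"
  shows "(hadj (glue_E EH EG r w) ^^ (hdist EG (projG p) (projG q) + hdist EH (projH p) (projH q))) p q"
proof (cases "p \<in> VG - {r} \<and> q \<in> VG - {r}")
  case True
  then have "(hadj (glue_E EH EG r w) ^^ hdist EG p q) (s p) (s q)"
    using walk_glue_G[OF hconnected_walk[OF G(2)]] by blast
  with True show ?thesis by (simp add: collapse_def retract_def subst_root_def hdist_self)
next
  case False
  \<comment> \<open>one endpoint lies in \<open>H\<close>, so a shortest walk passes through the hub \<open>w\<close>\<close>
  then have "hdist EG (projG p) (projG q) = hdist EG (projG p) r + hdist EG (projG q) r"
    using hdist_commute[OF G(2) G(3) proj_in(1)[OF q]] by (auto simp: collapse_def retract_def hdist_self)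
  moreover have "(hadj (glue_E EH EG r w) ^^ hdist EH (projH p) (projH q)) (projH p) (projH q)"
    using walk_glue_H[OF hconnected_walk[OF H(2) proj_in(2)[OF p] proj_in(2)[OF q]]] .
  from relpowp_trans[OF relpowp_trans[OF walk_glue_to_hub[OF p] this]
      walk_sym[OF walk_glue_to_hub[OF q]]]
  have "(hadj (glue_E EH EG r w) ^^ (hdist EG (projG p) r + hdist EH (projH p) (projH q)
      + hdist EG (projG q) r)) p q" .
  ultimately show ?thesis by (simp add: ac_simps)
qed

theorem hdist_glue:
  assumes "p \<in> glue_V VH VG r w" "q \<in> glue_V VH VG r w"
  shows "hdist (glue_E EH EG r w) p q
    = hdist EG (projG p) (projG q) + hdist EH (projH p) (projH q)"
  using assms walk_glue dist_glue_increment by (intro hdist_eqI) (auto simp: hdist_self)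

lemma hconnected_glue: "hconnected (glue_V VH VG r w) (glue_E EH EG r w)"
  using walk_glue by (blast intro: hconnectedI)

end

section \<open>Perron--Frobenius theory of symmetric positive matrices\<close>

definition eigenpair :: "'a set \<Rightarrow> ('a \<Rightarrow> 'a \<Rightarrow> real) \<Rightarrow> real \<Rightarrow> ('a \<Rightarrow> real) \<Rightarrow> bool" where
  "eigenpair V M lam x \<longleftrightarrow> (\<forall>v. v \<notin> V \<longrightarrow> x v = 0) \<and> (\<exists>v\<in>V. x v \<noteq> 0) \<and>
     (\<forall>u\<in>V. (\<Sum>v\<in>V. M u v * x v) = lam * x u)"

definition quad_form :: "'a set \<Rightarrow> ('a \<Rightarrow> 'a \<Rightarrow> real) \<Rightarrow> ('a \<Rightarrow> real) \<Rightarrow> real" where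
  "quad_form V M x = (\<Sum>u\<in>V. \<Sum>v\<in>V. M u v * x u * x v)"

definition sum_sq :: "'a set \<Rightarrow> ('a \<Rightarrow> real) \<Rightarrow> real" where
  "sum_sq V x = (\<Sum>u\<in>V. (x u)\<^sup>2)"

lemma eigenpair_eigenvalue_mat:
  assumes xs: "set xs = V" "distinct xs" and x: "eigenpair V M lam x"
  shows "eigenvalue (Matrix.mat (length xs) (length xs) (\<lambda>(i, j). M (xs ! i) (xs ! j))) lam"
proof -
  define n where "n = length xs"
  define A :: "real mat" where "A = Matrix.mat n n (\<lambda>(i, j). M (xs ! i) (xs ! j))"
  define v where "v = Matrix.vec n (\<lambda>i. x (xs ! i))"
  have sum_conv: "(\<Sum>j\<in>{0..<n}. f (xs ! j)) = (\<Sum>w\<in>V. f w)" for f :: "'a \<Rightarrow> real"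
    using sum.reindex_bij_betw[of "(!) xs" "{..<n}" V f] xs unfolding n_def
    by (simp add: bij_betw_nth atLeast0LessThan)
  have "v \<noteq> 0\<^sub>v n"
  proof -
    from x obtain w where w: "w \<in> V" "x w \<noteq> 0" unfolding eigenpair_def by blast
    then obtain i where i: "i < n" "xs ! i = w" using xs n_def by (auto simp: in_set_conv_nth)
    with w have "vec_index v i \<noteq> 0" unfolding v_def by simp
    with i show ?thesis by auto
  qed
  moreover have "A *\<^sub>v v = lam \<cdot>\<^sub>v v"
  proof (rule eq_vecI)
    fix i assume "i < dim_vec (lam \<cdot>\<^sub>v v)"
    then have i: "i < n" unfolding v_def by simp
    then have "xs ! i \<in> V" using xs n_def by auto
    have "vec_index (A *\<^sub>v v) i = (\<Sum>j\<in>{0..<n}. M (xs ! i) (xs ! j) * x (xs ! j))"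
      using i unfolding A_def v_def by (simp add: scalar_prod_def)
    also have "\<dots> = (\<Sum>w\<in>V. M (xs ! i) w * x w)" by (rule sum_conv)
    also have "\<dots> = lam * x (xs ! i)" using x \<open>xs ! i \<in> V\<close> unfolding eigenpair_def by blast
    finally show "vec_index (A *\<^sub>v v) i = vec_index (lam \<cdot>\<^sub>v v) i" using i unfolding v_def by simp
  qed (simp add: A_def v_def)
  ultimately have "eigenvector A v lam" unfolding eigenvector_def A_def v_def by simp
  then show ?thesis unfolding eigenvalue_def A_def n_def by blast
qed

lemma finite_eigenvalues:
  assumes "finite V"
  shows "finite {lam. \<exists>x. eigenpair V M lam x}"
proof -
  obtain xs where xs: "set xs = V" "distinct xs" using finite_distinct_list[OF assms] by blast
  define A :: "real mat" where "A = Matrix.mat (length xs) (length xs) (\<lambda>(i, j). M (xs ! i) (xs ! j))"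
  have A: "A \<in> carrier_mat (length xs) (length xs)" unfolding A_def by simp
  have "{lam. \<exists>x. eigenpair V M lam x} \<subseteq> {k. poly (char_poly A) k = 0}"
    using eigenpair_eigenvalue_mat[OF xs] eigenvalue_root_char_poly[OF A] unfolding A_def by blast
  moreover have "char_poly A \<noteq> 0" using degree_monic_char_poly[OF A] by auto
  ultimately show ?thesis using poly_roots_finite finite_subset by blast
qed

lemma quad_form_eq: "quad_form V M x = (\<Sum>u\<in>V. x u * (\<Sum>v\<in>V. M u v * x v))"
  unfolding quad_form_def by (simp add: sum_distrib_left mult_ac)

lemma sum_sq_nonneg: "0 \<le> sum_sq V x"
  unfolding sum_sq_def by (simp add: sum_nonneg)

lemma sum_sq_eq_0_iff: "finite V \<Longrightarrow> sum_sq V x = 0 \<longleftrightarrow> (\<forall>u\<in>V. x u = 0)"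
  unfolding sum_sq_def by (simp add: sum_nonneg_eq_0_iff)

lemma quad_form_scale: "quad_form V M (\<lambda>v. c * x v) = c\<^sup>2 * quad_form V M x"
  unfolding quad_form_def by (simp add: sum_distrib_left power2_eq_square mult_ac)

lemma sum_sq_scale: "sum_sq V (\<lambda>v. c * x v) = c\<^sup>2 * sum_sq V x"
  unfolding sum_sq_def by (simp add: sum_distrib_left power_mult_distrib)

lemma eigenpair_quad_form: "eigenpair V M lam x \<Longrightarrow> quad_form V M x = lam * sum_sq V x"
  unfolding eigenpair_def quad_form_eq sum_sq_def
  by (simp add: sum_distrib_left power2_eq_square mult_ac)

lemma eigenpair_sum_sq_pos: "finite V \<Longrightarrow> eigenpair V M lam x \<Longrightarrow> 0 < sum_sq V x"
  using sum_sq_nonneg[of V x] sum_sq_eq_0_iff[of V x] unfolding eigenpair_def by force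

lemma quad_form_unit_sphere_max:
  assumes "finite V" "V \<noteq> {}"
  obtains x where "sum_sq V x = 1" "\<And>z. sum_sq V z = 1 \<Longrightarrow> quad_form V M z \<le> quad_form V M x"
proof -
  define T where "T = product_topology (\<lambda>_. euclideanreal) V"
  define K where "K = {z \<in> topspace T. sum_sq V z = 1} \<inter> PiE V (\<lambda>_. {-1..1})"
  have proj: "continuous_map T euclideanreal (\<lambda>x. x i)" if "i \<in> V" for i
    unfolding T_def using continuous_map_product_projection[of i V "\<lambda>_. euclideanreal"] that
    by simp
  have "continuous_map T euclideanreal (sum_sq V)"
    unfolding sum_sq_def[abs_def] by (intro continuous_map_sum continuous_map_real_pow assms(1) proj)
  then have "closedin T {z \<in> topspace T. sum_sq V z \<in> {1}}"
    by (rule closedin_continuous_map_preimage) simp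
  moreover have "compactin T (PiE V (\<lambda>_. {-1..1::real}))"
    unfolding T_def by (simp add: compactin_PiE)
  ultimately have "compactin T K" unfolding K_def by (simp add: closed_Int_compactin)
  moreover have "continuous_map T euclideanreal (quad_form V M)"
    unfolding quad_form_def[abs_def]
    by (intro continuous_map_sum continuous_map_real_mult assms(1) continuous_map_canonical_const proj)
  ultimately have "compact (quad_form V M ` K)"
    using image_compactin by (metis compactin_euclidean_iff)
  moreover obtain v0 where v0: "v0 \<in> V" using assms(2) by blast
  then have "restrict (\<lambda>v. if v = v0 then 1 else 0) V \<in> K"
    unfolding K_def T_def sum_sq_def using assms(1)
    by (simp add: if_distrib[of "\<lambda>x. x\<^sup>2"] restrict_PiE_iff cong: if_cong)
  ultimately obtain x where x: "x \<in> K" "\<forall>z\<in>K. quad_form V M z \<le> quad_form V M x"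
    using compact_attains_sup[of "quad_form V M ` K"] by blast
  show thesis
  proof
    show "sum_sq V x = 1" using x(1) unfolding K_def by blast
    fix z assume z: "sum_sq V z = 1"
    have "restrict z V \<in> K"
    proof -
      have "(z v)\<^sup>2 \<le> 1" if "v \<in> V" for v
        using member_le_sum[OF that _ assms(1), of "\<lambda>v. (z v)\<^sup>2"] z unfolding sum_sq_def by simp
      then have "\<bar>z v\<bar> \<le> 1" if "v \<in> V" for v using that by (simp add: abs_square_le_1)
      then show ?thesis using z unfolding K_def T_def sum_sq_def by (auto simp: abs_le_iff)
    qed
    then have "quad_form V M (restrict z V) \<le> quad_form V M x" using x(2) by blast
    then show "quad_form V M z \<le> quad_form V M x" unfolding quad_form_def by simp
  qed
qed

lemma quad_form_le_max:
  assumes "finite V" "V \<noteq> {}"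
  obtains x where "sum_sq V x = 1" "\<And>y. quad_form V M y \<le> quad_form V M x * sum_sq V y"
proof -
  obtain x where x: "sum_sq V x = 1" "\<And>z. sum_sq V z = 1 \<Longrightarrow> quad_form V M z \<le> quad_form V M x"
    using quad_form_unit_sphere_max[OF assms] by blast
  have "quad_form V M y \<le> quad_form V M x * sum_sq V y" for y
  proof (cases "sum_sq V y = 0")
    case True
    then have "quad_form V M y = 0"
      using sum_sq_eq_0_iff[OF assms(1)] unfolding quad_form_def by simp
    with True show ?thesis by simp
  next
    case False
    then have pos: "0 < sum_sq V y" using sum_sq_nonneg[of V y] by simp
    define c where "c = 1 / sqrt (sum_sq V y)"
    have c2: "c\<^sup>2 = 1 / sum_sq V y" unfolding c_def using pos by (simp add: power_divide)
    have "quad_form V M y = quad_form V M (\<lambda>v. c * y v) * sum_sq V y"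
      using c2 pos by (simp add: quad_form_scale)
    also have "\<dots> \<le> quad_form V M x * sum_sq V y"
      using pos c2 by (intro mult_right_mono x(2)) (simp_all add: sum_sq_scale)
    finally show ?thesis .
  qed
  with x(1) show thesis by (rule that)
qed

lemma linear_coeff_eq_0:
  fixes N c :: real
  assumes "0 \<le> N" and le: "\<And>t. 0 < t \<Longrightarrow> 2 * t * N + t\<^sup>2 * c \<le> 0"
  shows "N = 0"
proof (rule ccontr)
  assume "N \<noteq> 0"
  with assms(1) have N: "0 < N" by simp
  define t where "t = N / (\<bar>c\<bar> + 1)"
  have t: "0 < t" "t * \<bar>c\<bar> \<le> N" unfolding t_def using N by (auto simp: field_simps)
  then have "t\<^sup>2 * \<bar>c\<bar> \<le> t * N" by (simp add: power2_eq_square mult.assoc)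
  moreover have "- (t\<^sup>2 * \<bar>c\<bar>) \<le> t\<^sup>2 * c" using mult_left_mono[of "-\<bar>c\<bar>" c "t\<^sup>2"] by simp
  moreover have "0 < t * N" using t N by simp
  ultimately show False using le[OF t(1)] by linarith
qed

lemma quad_form_add_scaled:
  assumes sym: "\<And>u v. u \<in> V \<Longrightarrow> v \<in> V \<Longrightarrow> M u v = M v u"
  shows "quad_form V M (\<lambda>u. x u + t * w u) = quad_form V M x
    + 2 * t * (\<Sum>u\<in>V. w u * (\<Sum>v\<in>V. M u v * x v)) + t\<^sup>2 * quad_form V M w"
proof -
  have "(\<Sum>u\<in>V. \<Sum>v\<in>V. M u v * x u * w v) = (\<Sum>v\<in>V. \<Sum>u\<in>V. M v u * w v * x u)"
    by (subst sum.swap) (simp add: sym mult_ac cong: sum.cong)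
  also have "\<dots> = (\<Sum>u\<in>V. w u * (\<Sum>v\<in>V. M u v * x v))"
    by (simp add: sum_distrib_left mult_ac)
  finally have swap: "(\<Sum>u\<in>V. \<Sum>v\<in>V. M u v * x u * w v) = (\<Sum>u\<in>V. w u * (\<Sum>v\<in>V. M u v * x v))" .
  have "quad_form V M (\<lambda>u. x u + t * w u) = quad_form V M x
      + t * (\<Sum>u\<in>V. \<Sum>v\<in>V. M u v * x u * w v) + t * (\<Sum>u\<in>V. w u * (\<Sum>v\<in>V. M u v * x v))
      + t\<^sup>2 * quad_form V M w"
    unfolding quad_form_def
    by (simp add: algebra_simps power2_eq_square sum.distrib sum_distrib_left)
  then show ?thesis unfolding swap by simp
qed

lemma sum_sq_add_scaled:
  "sum_sq V (\<lambda>u. x u + t * w u) = sum_sq V x + 2 * t * (\<Sum>u\<in>V. x u * w u) + t\<^sup>2 * sum_sq V w"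
  unfolding sum_sq_def by (simp add: algebra_simps power2_eq_square sum.distrib sum_distrib_left)

text \<open>Perturb a maximiser \<open>x\<close> of the Rayleigh quotient in the direction \<open>w = M x - \<lambda> x\<close>:
  the first-order change is \<open>2 t |w|\<^sup>2\<close>, which must vanish.\<close>
lemma rayleigh_max_eigen:
  assumes "finite V" and sym: "\<And>u v. u \<in> V \<Longrightarrow> v \<in> V \<Longrightarrow> M u v = M v u"
    and le: "\<And>y. quad_form V M y \<le> lam * sum_sq V y" and eq: "quad_form V M x = lam * sum_sq V x"
    and u: "u \<in> V"
  shows "(\<Sum>v\<in>V. M u v * x v) = lam * x u"
proof -
  define w where "w u = (\<Sum>v\<in>V. M u v * x v) - lam * x u" for u
  define c where "c = quad_form V M w - lam * sum_sq V w"
  have "w u * (\<Sum>v\<in>V. M u v * x v) = (w u)\<^sup>2 + lam * (x u * w u)" for u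
    by (simp add: w_def power2_eq_square algebra_simps)
  then have Mw: "(\<Sum>u\<in>V. w u * (\<Sum>v\<in>V. M u v * x v)) = sum_sq V w + lam * (\<Sum>u\<in>V. x u * w u)"
    by (simp add: sum_sq_def sum.distrib sum_distrib_left)
  have expand: "quad_form V M (\<lambda>u. x u + t * w u) - lam * sum_sq V (\<lambda>u. x u + t * w u)
      = 2 * t * sum_sq V w + t\<^sup>2 * c" for t
    using quad_form_add_scaled[of V M x t w, OF sym] sum_sq_add_scaled[of V x t w] Mw eq unfolding c_def
    by (simp add: algebra_simps)
  have "sum_sq V w = 0"
  proof (rule linear_coeff_eq_0[OF sum_sq_nonneg, where c=c])
    fix t :: real
    show "2 * t * sum_sq V w + t\<^sup>2 * c \<le> 0"
      using le[of "\<lambda>u. x u + t * w u"] expand[of t] by simp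
  qed
  with u show ?thesis using sum_sq_eq_0_iff[OF assms(1)] unfolding w_def by simp
qed

lemma quad_form_diff_block:
  assumes "finite W" "X \<subseteq> W"
    and same: "\<And>p q. p \<in> W \<Longrightarrow> q \<in> W \<Longrightarrow> (p \<in> X \<longleftrightarrow> q \<in> X) \<Longrightarrow> M' p q = M p q"
    and cross: "\<And>p q. p \<in> X \<Longrightarrow> q \<in> W - X \<Longrightarrow> M' p q - M p q = g q \<and> M' q p - M q p = g q"
  shows "quad_form W M' x - quad_form W M x = 2 * (\<Sum>p\<in>X. x p) * (\<Sum>q\<in>W - X. g q * x q)"
proof -
  define K where "K p q = (M' p q - M p q) * x p * x q" for p q
  have split: "sum f W = sum f X + sum f (W - X)" for f :: "'a \<Rightarrow> real"
    using sum.subset_diff[OF assms(2,1)] by (simp add: add.commute)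
  have "quad_form W M' x - quad_form W M x = (\<Sum>p\<in>W. \<Sum>q\<in>W. K p q)"
    unfolding quad_form_def K_def by (simp add: sum_subtractf left_diff_distrib)
  also have "\<dots> = (\<Sum>p\<in>X. \<Sum>q\<in>W - X. K p q) + (\<Sum>p\<in>W - X. \<Sum>q\<in>X. K p q)"
  proof -
    have "K p q = 0" if "p \<in> W" "q \<in> W" "p \<in> X \<longleftrightarrow> q \<in> X" for p q
      using same[OF that] unfolding K_def by simp
    then have "(\<Sum>p\<in>X. \<Sum>q\<in>X. K p q) = 0" "(\<Sum>p\<in>W - X. \<Sum>q\<in>W - X. K p q) = 0"
      using assms(2) by (auto intro!: sum.neutral)
    then show ?thesis by (simp add: split[of "\<lambda>p. \<Sum>q\<in>W. K p q"] split sum.distrib)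
  qed
  also have "\<dots> = (\<Sum>p\<in>X. \<Sum>q\<in>W - X. x p * (g q * x q)) + (\<Sum>p\<in>W - X. \<Sum>q\<in>X. (g p * x p) * x q)"
    using cross unfolding K_def by (intro arg_cong2[where f="(+)"] sum.cong refl) auto
  also have "\<dots> = (\<Sum>p\<in>X. x p) * (\<Sum>q\<in>W - X. g q * x q)
      + (\<Sum>p\<in>W - X. g p * x p) * (\<Sum>q\<in>X. x q)"
    by (simp only: sum_product)
  also have "\<dots> = 2 * (\<Sum>p\<in>X. x p) * (\<Sum>q\<in>W - X. g q * x q)"
    by simp
  finally show ?thesis .
qed

lemma quad_form_reindex:
  assumes "bij_betw f W W"
  shows "quad_form W (\<lambda>p q. M (f p) (f q)) (\<lambda>p. x (f p)) = quad_form W M x"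
proof -
  have "(\<Sum>q\<in>W. M (f p) (f q) * x (f p) * x (f q)) = (\<Sum>q\<in>W. M (f p) q * x (f p) * x q)" for p
    using sum.reindex_bij_betw[OF assms, of "\<lambda>q. M (f p) q * x (f p) * x q"] by simp
  then show ?thesis
    using sum.reindex_bij_betw[OF assms, of "\<lambda>p. \<Sum>q\<in>W. M p q * x p * x q"]
    unfolding quad_form_def by simp
qed

lemma sum_sq_reindex: "bij_betw f W W \<Longrightarrow> sum_sq W (\<lambda>p. x (f p)) = sum_sq W x"
  unfolding sum_sq_def by (rule sum.reindex_bij_betw)

lemma Max_eigenvalue_eqI:
  assumes "finite V" "eigenpair V M lam p" "\<And>y. quad_form V M y \<le> lam * sum_sq V y"
  shows "Max {l. \<exists>x. eigenpair V M l x} = lam"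
proof (rule Max_eqI[OF finite_eigenvalues[OF assms(1)]])
  fix l assume "l \<in> {l. \<exists>x. eigenpair V M l x}"
  then obtain y where y: "eigenpair V M l y" by blast
  have "l * sum_sq V y \<le> lam * sum_sq V y" using eigenpair_quad_form[OF y] assms(3)[of y] by simp
  then show "l \<le> lam" using eigenpair_sum_sq_pos[OF assms(1) y] by simp
qed (use assms(2) in blast)

locale pos_sym_matrix =
  fixes V :: "'a set" and M :: "'a \<Rightarrow> 'a \<Rightarrow> real"
  assumes finite: "finite V" and nonempty: "V \<noteq> {}"
    and sym: "\<And>u v. u \<in> V \<Longrightarrow> v \<in> V \<Longrightarrow> M u v = M v u"
    and pos: "\<And>u v. u \<in> V \<Longrightarrow> v \<in> V \<Longrightarrow> u \<noteq> v \<Longrightarrow> 0 < M u v"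
    and diag: "\<And>u. u \<in> V \<Longrightarrow> 0 \<le> M u u"
begin

lemma nonneg: "u \<in> V \<Longrightarrow> v \<in> V \<Longrightarrow> 0 \<le> M u v"
  using pos diag by (cases "u = v") (auto intro: less_imp_le)

lemma zero_if_row_zero:
  assumes u: "u \<in> V" "y u = 0" and y: "\<And>v. v \<in> V \<Longrightarrow> 0 \<le> y v"
    and row: "(\<Sum>v\<in>V. M u v * y v) = 0"
  shows "v \<in> V \<Longrightarrow> y v = 0"
proof -
  have "\<forall>v\<in>V. M u v * y v = 0"
    using row sum_nonneg_eq_0_iff[OF finite, of "\<lambda>v. M u v * y v"] nonneg[OF u(1)] y by auto
  then show "v \<in> V \<Longrightarrow> y v = 0" for v using pos[OF u(1), of v] u(2) by (cases "u = v") auto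
qed

lemma nonneg_eigenvector_pos:
  assumes "eigenpair V M lam y" "\<And>v. v \<in> V \<Longrightarrow> 0 \<le> y v"
  shows "v \<in> V \<Longrightarrow> 0 < y v"
  using assms zero_if_row_zero unfolding eigenpair_def by (metis less_eq_real_def mult_zero_right)

text \<open>Subtracting from \<open>y\<close> the largest multiple of \<open>p\<close> that stays below it leaves a nonnegative
  eigenvector with a zero entry.\<close>
lemma pos_eigenvectors_proportional:
  assumes y: "eigenpair V M lam y" "\<And>v. v \<in> V \<Longrightarrow> 0 < y v"
    and p: "eigenpair V M lam p" "\<And>v. v \<in> V \<Longrightarrow> 0 < p v"
  obtains c where "0 < c" "\<And>v. v \<in> V \<Longrightarrow> y v = c * p v"
proof -
  define c where "c = Min ((\<lambda>v. y v / p v) ` V)"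
  have "c \<in> (\<lambda>v. y v / p v) ` V" unfolding c_def using finite nonempty by (intro Min_in) auto
  then obtain u where u: "u \<in> V" "c = y u / p u" by blast
  define z where "z v = y v - c * p v" for v
  have z: "0 \<le> z v" if "v \<in> V" for v
  proof -
    have "c \<le> y v / p v" unfolding c_def using finite that by simp
    then show ?thesis unfolding z_def using p(2)[OF that] by (simp add: le_divide_eq)
  qed
  have "z u = 0" unfolding z_def u(2) using p(2)[OF u(1)] by simp
  moreover have "(\<Sum>v\<in>V. M u v * z v) = (\<Sum>v\<in>V. M u v * y v) - c * (\<Sum>v\<in>V. M u v * p v)"
    unfolding z_def by (simp add: right_diff_distrib sum_subtractf sum_distrib_left mult_ac)
  then have "(\<Sum>v\<in>V. M u v * z v) = lam * z u"
    using y(1) p(1) u(1) unfolding eigenpair_def z_def by (simp add: algebra_simps)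
  ultimately have "z v = 0" if "v \<in> V" for v
    using zero_if_row_zero[OF u(1) _ z] that by simp
  moreover have "0 < c" unfolding u(2) using y(2) p(2) u(1) by simp
  ultimately show thesis using that unfolding z_def by simp
qed

text \<open>The absolute value of a maximiser of the Rayleigh quotient is again a maximiser, hence an
  eigenvector, and it is positive.\<close>
lemma pos_eigenvector_of_max:
  obtains lam p where "eigenpair V M lam p" "\<And>v. v \<in> V \<Longrightarrow> 0 < p v" "sum_sq V p = 1"
    "\<And>y. quad_form V M y \<le> lam * sum_sq V y"
proof -
  obtain x where x: "sum_sq V x = 1" and le: "\<And>y. quad_form V M y \<le> quad_form V M x * sum_sq V y"
    using quad_form_le_max[OF finite nonempty] by blast
  define lam where "lam = quad_form V M x"
  define p where "p v = (if v \<in> V then \<bar>x v\<bar> else 0)" for v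
  have p1: "sum_sq V p = 1" using x unfolding p_def sum_sq_def by simp
  have "quad_form V M x \<le> quad_form V M p" unfolding quad_form_def
  proof (intro sum_mono)
    fix u v assume "u \<in> V" "v \<in> V"
    then show "M u v * x u * x v \<le> M u v * p u * p v"
      using nonneg[of u v] abs_ge_self[of "M u v * x u * x v"] unfolding p_def by (simp add: abs_mult)
  qed
  with le[of p] p1 have "quad_form V M p = lam * sum_sq V p" unfolding lam_def by simp
  then have "(\<Sum>v\<in>V. M u v * p v) = lam * p u" if "u \<in> V" for u
    using rayleigh_max_eigen[OF finite sym le[folded lam_def]] that by blast
  moreover have "\<exists>v\<in>V. p v \<noteq> 0" using p1 sum_sq_eq_0_iff[OF finite, of p] by auto
  ultimately have eig: "eigenpair V M lam p" unfolding eigenpair_def p_def by auto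
  have "0 < p v" if "v \<in> V" for v
    using nonneg_eigenvector_pos[OF eig _ that] unfolding p_def by simp
  with that eig p1 le show thesis unfolding lam_def by blast
qed

lemma unit_pos_eigenvector_unique:
  assumes y: "eigenpair V M lam y" "\<And>v. v \<in> V \<Longrightarrow> 0 < y v" "sum_sq V y = 1"
    and p: "eigenpair V M lam p" "\<And>v. v \<in> V \<Longrightarrow> 0 < p v" "sum_sq V p = 1"
  shows "y = p"
proof -
  obtain c where c: "0 < c" "\<And>v. v \<in> V \<Longrightarrow> y v = c * p v"
    using pos_eigenvectors_proportional[OF y(1,2) p(1,2)] by blast
  then have "sum_sq V y = c\<^sup>2 * sum_sq V p" unfolding sum_sq_def
    by (simp add: sum_distrib_left power_mult_distrib)
  with y(3) p(3) c(1) have "c = 1" by (simp add: power2_eq_1_iff)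
  with c(2) y(1) p(1) show "y = p" unfolding eigenpair_def by fastforce
qed

theorem perron_frobenius:
  obtains lam p where "Max {l. \<exists>x. eigenpair V M l x} = lam" "eigenpair V M lam p"
    "\<And>v. v \<in> V \<Longrightarrow> 0 < p v" "sum_sq V p = 1" "\<And>y. quad_form V M y \<le> lam * sum_sq V y"
    "\<And>y. eigenpair V M lam y \<Longrightarrow> (\<And>v. v \<in> V \<Longrightarrow> 0 < y v) \<Longrightarrow> sum_sq V y = 1 \<Longrightarrow> y = p"
proof -
  obtain lam p where p: "eigenpair V M lam p" "\<And>v. v \<in> V \<Longrightarrow> 0 < p v" "sum_sq V p = 1"
    and le: "\<And>y. quad_form V M y \<le> lam * sum_sq V y"
    by (rule pos_eigenvector_of_max) blast
  have "Max {l. \<exists>x. eigenpair V M l x} = lam"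
    using Max_eigenvalue_eqI[OF finite p(1) le] .
  with p le show thesis using that unit_pos_eigenvector_unique[OF _ _ _ p] by blast
qed

end

abbreviation hdist_mat :: "'a set set \<Rightarrow> 'a \<Rightarrow> 'a \<Rightarrow> real" where
  "hdist_mat E \<equiv> \<lambda>u v. real (hdist E u v)"

lemma dist_eigenpair_eq: "dist_eigenpair V E = eigenpair V (hdist_mat E)"
  unfolding dist_eigenpair_def[abs_def] eigenpair_def[abs_def] by simp

theorem dist_perron:
  assumes "hypergraph V E" "hconnected V E" "V \<noteq> {}"
  shows "eigenpair V (hdist_mat E) (dist_rho V E) (perron V E)"
    and "\<And>v. v \<in> V \<Longrightarrow> 0 < perron V E v"
    and "sum_sq V (perron V E) = 1"
    and "\<And>y. quad_form V (hdist_mat E) y \<le> dist_rho V E * sum_sq V y"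
proof -
  interpret pos_sym_matrix V "hdist_mat E"
  proof
    show "finite V" using assms(1) unfolding hypergraph_def by blast
    show "V \<noteq> {}" by (rule assms(3))
    show "real (hdist E u v) = real (hdist E v u)" if "u \<in> V" "v \<in> V" for u v
      using hdist_commute[OF assms(2) that] by simp
    show "0 < real (hdist E u v)" if "u \<in> V" "v \<in> V" "u \<noteq> v" for u v
      using hdist_pos[OF assms(2) that] by simp
  qed simp
  obtain lam p where lam: "Max {l. \<exists>x. eigenpair V (hdist_mat E) l x} = lam"
    and p: "eigenpair V (hdist_mat E) lam p" "\<And>v. v \<in> V \<Longrightarrow> 0 < p v" "sum_sq V p = 1"
    and le: "\<And>y. quad_form V (hdist_mat E) y \<le> lam * sum_sq V y"
    and uniq: "\<And>y. eigenpair V (hdist_mat E) lam y \<Longrightarrow> (\<And>v. v \<in> V \<Longrightarrow> 0 < y v) \<Longrightarrow>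
      sum_sq V y = 1 \<Longrightarrow> y = p"
    by (rule perron_frobenius) blast
  have rho: "dist_rho V E = lam" unfolding dist_rho_def dist_eigenpair_eq lam ..
  have "perron V E = p"
    unfolding perron_def dist_eigenpair_eq rho
  proof (rule the_equality)
    show "eigenpair V (hdist_mat E) lam p \<and> (\<forall>v\<in>V. 0 < p v) \<and> (\<Sum>v\<in>V. (p v)\<^sup>2) = 1"
      using p unfolding sum_sq_def by blast
    fix y assume "eigenpair V (hdist_mat E) lam y \<and> (\<forall>v\<in>V. 0 < y v) \<and> (\<Sum>v\<in>V. (y v)\<^sup>2) = 1"
    then show "y = p" using uniq unfolding sum_sq_def by blast
  qed
  with rho p le show "eigenpair V (hdist_mat E) (dist_rho V E) (perron V E)"
    "\<And>v. v \<in> V \<Longrightarrow> 0 < perron V E v" "sum_sq V (perron V E) = 1"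
    "\<And>y. quad_form V (hdist_mat E) y \<le> dist_rho V E * sum_sq V y"
    by simp_all
qed

section \<open>Two pendant hypergraphs\<close>

locale pendant_pair =
  fixes VH :: "'a set" and EH :: "'a set set"
    and V1 :: "'a set" and E1 :: "'a set set" and r1 :: 'a
    and V2 :: "'a set" and E2 :: "'a set set" and r2 :: 'a
  assumes H: "hypergraph VH EH" "hconnected VH EH"
    and G1: "hypergraph V1 E1" "hconnected V1 E1" "r1 \<in> V1"
    and G2: "hypergraph V2 E2" "hconnected V2 E2" "r2 \<in> V2"
    and disj: "VH \<inter> V1 = {}" "VH \<inter> V2 = {}" "V1 \<inter> V2 = {}"
begin

abbreviation "W \<equiv> VH \<union> (V1 - {r1}) \<union> (V2 - {r2})"

text \<open>\<open>hub a b p\<close> is the vertex of \<open>H\<close> at which \<open>p\<close> hangs when \<open>G\<^sub>1\<close> is glued at \<open>a\<close>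
  and \<open>G\<^sub>2\<close> at \<open>b\<close>.\<close>
definition hub :: "'a \<Rightarrow> 'a \<Rightarrow> 'a \<Rightarrow> 'a" where
  "hub a b p = collapse (V1 - {r1}) a (collapse (V2 - {r2}) b p)"

lemma finite_W: "finite W"
  using H(1) G1(1) G2(1) unfolding hypergraph_def by simp

lemma sum_W: "(\<Sum>v\<in>W. f v) = (\<Sum>v\<in>VH. f v) + (\<Sum>v\<in>V1 - {r1}. f v) + (\<Sum>v\<in>V2 - {r2}. f v)"
  using finite_W disj by (subst sum.union_disjoint; auto)+

lemma sum_H_V1: "(\<Sum>v\<in>VH \<union> (V1 - {r1}). f v) = (\<Sum>v\<in>VH. f v) + (\<Sum>v\<in>V1 - {r1}. f v)"
  using finite_W disj by (subst sum.union_disjoint) auto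

lemma retract_H:
  "p \<in> VH \<Longrightarrow> retract (V1 - {r1}) r1 p = r1" "p \<in> VH \<Longrightarrow> retract (V2 - {r2}) r2 p = r2"
  using disj unfolding retract_def by auto

lemma hub_H: "p \<in> VH \<Longrightarrow> hub a b p = p"
  and hub_V1: "p \<in> V1 - {r1} \<Longrightarrow> hub a b p = a"
  and hub_V2: "b \<in> VH \<Longrightarrow> p \<in> V2 - {r2} \<Longrightarrow> hub a b p = b"
  and hub_outside_V2: "p \<notin> V2 - {r2} \<Longrightarrow> hub a b p = hub a a p"
  using disj unfolding hub_def collapse_def by auto

lemma hub_in: "a \<in> VH \<Longrightarrow> b \<in> VH \<Longrightarrow> p \<in> W \<Longrightarrow> hub a b p \<in> VH"
  using hub_H hub_V1 hub_V2 by auto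

lemma glue_interpretations:
  assumes "a \<in> VH" "b \<in> VH"
  shows "rooted_glue VH EH V1 E1 r1 a"
    and "rooted_glue (glue_V VH V1 r1 a) (glue_E EH E1 r1 a) V2 E2 r2 b"
proof -
  show A: "rooted_glue VH EH V1 E1 r1 a"
    using H G1 assms(1) disj(1) by unfold_locales
  show "rooted_glue (glue_V VH V1 r1 a) (glue_E EH E1 r1 a) V2 E2 r2 b"
    using rooted_glue.hypergraph_glue[OF A] rooted_glue.hconnected_glue[OF A] G2 assms(2) disj
    unfolding rooted_glue.glue_V_eq[OF A] rooted_glue_def by blast
qed

lemma glue2_V_eq_W: "a \<in> VH \<Longrightarrow> b \<in> VH \<Longrightarrow> glue2_V VH V1 r1 a V2 r2 b = W"
  using rooted_glue.glue_V_eq[OF glue_interpretations(1)] rooted_glue.glue_V_eq[OF glue_interpretations(2)]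
  unfolding glue2_V_eq by simp

lemma hypergraph_glue2:
  "a \<in> VH \<Longrightarrow> b \<in> VH \<Longrightarrow> hypergraph (glue2_V VH V1 r1 a V2 r2 b) (glue2_E EH E1 r1 a E2 r2 b)"
  using rooted_glue.hypergraph_glue[OF glue_interpretations(2)] unfolding glue2_V_eq glue2_E_eq .

lemma hconnected_glue2:
  "a \<in> VH \<Longrightarrow> b \<in> VH \<Longrightarrow> hconnected (glue2_V VH V1 r1 a V2 r2 b) (glue2_E EH E1 r1 a E2 r2 b)"
  using rooted_glue.hconnected_glue[OF glue_interpretations(2)] unfolding glue2_V_eq glue2_E_eq .

theorem hdist_glue2:
  assumes "a \<in> VH" "b \<in> VH" "p \<in> W" "q \<in> W"
  shows "hdist (glue2_E EH E1 r1 a E2 r2 b) p q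
    = hdist E1 (retract (V1 - {r1}) r1 p) (retract (V1 - {r1}) r1 q)
    + hdist E2 (retract (V2 - {r2}) r2 p) (retract (V2 - {r2}) r2 q)
    + hdist EH (hub a b p) (hub a b q)"
proof -
  interpret A: rooted_glue VH EH V1 E1 r1 a by (rule glue_interpretations(1)[OF assms(1,2)])
  interpret B: rooted_glue "glue_V VH V1 r1 a" "glue_E EH E1 r1 a" V2 E2 r2 b
    by (rule glue_interpretations(2)[OF assms(1,2)])
  have pq: "p \<in> glue_V (glue_V VH V1 r1 a) V2 r2 b" "q \<in> glue_V (glue_V VH V1 r1 a) V2 r2 b"
    using assms glue2_V_eq_W[OF assms(1,2)] unfolding glue2_V_eq by auto
  note B.hdist_glue[OF pq, folded glue2_E_eq]
  moreover have "B.projH p \<in> glue_V VH V1 r1 a" "B.projH q \<in> glue_V VH V1 r1 a"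
    using B.proj_in pq by blast+
  note A.hdist_glue[OF this]
  moreover have "retract (V1 - {r1}) r1 (B.projH x) = retract (V1 - {r1}) r1 x" for x
    using assms(2) disj by (intro retract_collapse) auto
  ultimately show ?thesis unfolding hub_def by (simp add: ac_simps)
qed

abbreviation dmat :: "'a \<Rightarrow> 'a \<Rightarrow> 'a \<Rightarrow> 'a \<Rightarrow> real" where
  "dmat a b \<equiv> hdist_mat (glue2_E EH E1 r1 a E2 r2 b)"

lemma glue2_perron:
  assumes "a \<in> VH" "b \<in> VH"
  defines "x \<equiv> perron (glue2_V VH V1 r1 a V2 r2 b) (glue2_E EH E1 r1 a E2 r2 b)"
    and "lam \<equiv> dist_rho (glue2_V VH V1 r1 a V2 r2 b) (glue2_E EH E1 r1 a E2 r2 b)"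
  shows "eigenpair W (dmat a b) lam x" and "\<And>v. v \<in> W \<Longrightarrow> 0 < x v" and "sum_sq W x = 1"
    and "\<And>y. quad_form W (dmat a b) y \<le> lam * sum_sq W y"
  using dist_perron[OF hypergraph_glue2[OF assms(1,2)] hconnected_glue2[OF assms(1,2)]] assms(1)
  unfolding x_def lam_def glue2_V_eq_W[OF assms(1,2)] by auto

lemma dmat_diff:
  assumes "a \<in> VH" "b \<in> VH" "b' \<in> VH" "p \<in> W" "q \<in> W"
  shows "dmat a b' p q - dmat a b p q
    = real (hdist EH (hub a b' p) (hub a b' q)) - real (hdist EH (hub a b p) (hub a b q))"
  using hdist_glue2[of a b' p q] hdist_glue2[of a b p q] assms by simp

definition shift :: "'a \<Rightarrow> 'a \<Rightarrow> 'a \<Rightarrow> real" where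
  "shift a b q = real (hdist EH b (hub a a q)) - real (hdist EH a (hub a a q))"

lemma shift_H: "q \<in> VH \<Longrightarrow> shift a b q = real (hdist EH b q) - real (hdist EH a q)"
  and shift_pendant: "q \<in> (V1 - {r1}) \<union> (V2 - {r2}) \<Longrightarrow> a \<in> VH \<Longrightarrow> shift a b q = real (hdist EH b a)"
  unfolding shift_def by (auto simp: hub_H hub_V1 hub_V2 hdist_self)

lemma quad_form_move_second:
  assumes a: "a \<in> VH" and b: "b \<in> VH"
  shows "quad_form W (dmat a b) x = quad_form W (dmat a a) x
    + 2 * (\<Sum>p\<in>V2 - {r2}. x p) * (\<Sum>q\<in>VH \<union> (V1 - {r1}). shift a b q * x q)"
proof -
  have "W - (V2 - {r2}) = VH \<union> (V1 - {r1})" using disj by blast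
  moreover have "quad_form W (dmat a b) x - quad_form W (dmat a a) x
      = 2 * (\<Sum>p\<in>V2 - {r2}. x p) * (\<Sum>q\<in>W - (V2 - {r2}). shift a b q * x q)"
  proof (rule quad_form_diff_block[OF finite_W])
    fix p q assume pq: "p \<in> W" "q \<in> W" "p \<in> V2 - {r2} \<longleftrightarrow> q \<in> V2 - {r2}"
    then show "dmat a b p q = dmat a a p q"
    proof (cases "p \<in> V2 - {r2}")
      case True
      with pq show ?thesis using dmat_diff[OF a a b pq(1,2)] hub_V2 a b by (simp add: hdist_self)
    next
      case False
      with pq show ?thesis using dmat_diff[OF a a b pq(1,2)] hub_outside_V2[of p a b] hub_outside_V2[of q a b]
        by simp
    qed
  next
    fix p q assume p: "p \<in> V2 - {r2}" and q: "q \<in> W - (V2 - {r2})"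
    have "hub a a q \<in> VH" using hub_in[OF a a] q by blast
    then have "hdist EH (hub a a q) a = hdist EH a (hub a a q)"
      "hdist EH (hub a a q) b = hdist EH b (hub a a q)"
      using hdist_commute[OF H(2)] a b by blast+
    moreover have "p \<in> W" "q \<in> W" using p q by blast+
    ultimately show "dmat a b p q - dmat a a p q = shift a b q \<and> dmat a b q p - dmat a a q p = shift a b q"
      using dmat_diff[OF a a b, of p q] dmat_diff[OF a a b, of q p] q hub_outside_V2[of q a b]
        hub_V2[OF a p] hub_V2[OF b p] unfolding shift_def by simp
  qed auto
  ultimately show ?thesis by simp
qed

lemma dmat_row_diff:
  assumes a: "a \<in> VH" and b: "b \<in> VH" and v: "v \<in> W"
  shows "dmat a a b v - dmat a a a v = shift a b v"
  using hdist_glue2[OF a a _ v, of a] hdist_glue2[OF a a _ v, of b] a b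
  unfolding shift_def by (simp add: hub_H retract_H)

lemma dmat_transpose:
  assumes u: "u1 \<in> VH" "u2 \<in> VH"
    and twin: "\<And>a b. a \<in> VH \<Longrightarrow> b \<in> VH \<Longrightarrow>
      hdist EH (transpose u1 u2 a) (transpose u1 u2 b) = hdist EH a b"
    and pq: "p \<in> W" "q \<in> W"
  shows "dmat u1 u2 p q = dmat u2 u1 (transpose u1 u2 p) (transpose u1 u2 q)"
proof -
  let ?t = "transpose u1 u2"
  have fix_pendants: "?t c = c" if "c \<in> (V1 - {r1}) \<union> (V2 - {r2})" for c
    using that u disj by (auto simp: transpose_def)
  have t_in: "?t c \<in> W" and t_H: "c \<in> VH \<Longrightarrow> ?t c \<in> VH" if "c \<in> W" for c
    using that u fix_pendants[of c] by (auto simp: transpose_def)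
  have retract_t: "retract X r (?t c) = retract X r c"
    if "c \<in> W" "X \<subseteq> (V1 - {r1}) \<union> (V2 - {r2})" for c X r
  proof (cases "c \<in> VH")
    case True
    then have "c \<notin> X" "?t c \<notin> X" using t_H[OF that(1)] that(2) disj by blast+
    then show ?thesis unfolding retract_def by simp
  qed (use that fix_pendants in simp)
  have hub_t: "hub u2 u1 (?t c) = ?t (hub u1 u2 c)" if c: "c \<in> W" for c
  proof -
    consider "c \<in> VH" | "c \<in> V1 - {r1}" | "c \<in> V2 - {r2}" using c by blast
    then show ?thesis
    proof cases
      case 1
      then show ?thesis using t_H[OF c] by (simp add: hub_H)
    next
      case 2
      then show ?thesis using fix_pendants[of c] by (simp add: hub_V1)
    next
      case 3
      then show ?thesis using fix_pendants[of c] u by (simp add: hub_V2)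
    qed
  qed
  show ?thesis
    using hdist_glue2[OF u pq] hdist_glue2[OF u(2,1) t_in[OF pq(1)] t_in[OF pq(2)]]
      retract_t[OF pq(1)] retract_t[OF pq(2)] hub_t[OF pq(1)] hub_t[OF pq(2)]
      twin[OF hub_in[OF u pq(1)] hub_in[OF u pq(2)]]
    by simp
qed

lemma bij_betw_transpose_W: "u1 \<in> VH \<Longrightarrow> u2 \<in> VH \<Longrightarrow> bij_betw (transpose u1 u2) W W"
  by (rule bij_betw_transpose_iff) auto

lemma quad_form_transpose:
  assumes u: "u1 \<in> VH" "u2 \<in> VH"
    and twin: "\<And>a b. a \<in> VH \<Longrightarrow> b \<in> VH \<Longrightarrow>
      hdist EH (transpose u1 u2 a) (transpose u1 u2 b) = hdist EH a b"
  shows "quad_form W (dmat u1 u2) (\<lambda>p. x (transpose u1 u2 p)) = quad_form W (dmat u2 u1) x"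
proof -
  have "quad_form W (dmat u1 u2) (\<lambda>p. x (transpose u1 u2 p))
      = quad_form W (\<lambda>p q. dmat u2 u1 (transpose u1 u2 p) (transpose u1 u2 q)) (\<lambda>p. x (transpose u1 u2 p))"
    unfolding quad_form_def using dmat_transpose[OF u twin] by (intro sum.cong refl) simp
  also have "\<dots> = quad_form W (dmat u2 u1) x"
    by (rule quad_form_reindex[OF bij_betw_transpose_W[OF u]])
  finally show ?thesis .
qed

lemma eigen_row_diff:
  assumes a: "a \<in> VH" and b: "b \<in> VH" and eig: "eigenpair W (dmat a a) lam x"
  shows "lam * (x b - x a) = (\<Sum>v\<in>W. shift a b v * x v)"
proof -
  have "lam * (x b - x a) = (\<Sum>v\<in>W. dmat a a b v * x v) - (\<Sum>v\<in>W. dmat a a a v * x v)"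
    using eig a b unfolding eigenpair_def by (simp add: right_diff_distrib)
  also have "\<dots> = (\<Sum>v\<in>W. (dmat a a b v - dmat a a a v) * x v)"
    by (simp add: sum_subtractf left_diff_distrib)
  also have "\<dots> = (\<Sum>v\<in>W. shift a b v * x v)"
    using dmat_row_diff[OF a b] by (intro sum.cong) simp_all
  finally show ?thesis .
qed

lemma eigen_row_ge:
  assumes a: "a \<in> VH" and b: "b \<in> VH" and eig: "eigenpair W (dmat a a) lam x"
    and nonneg: "\<And>v. v \<in> W \<Longrightarrow> 0 \<le> x v"
  shows "real (hdist EH a b) * x b \<le> lam * x a"
proof -
  have "dmat a a a b = real (hdist EH a b)"
    using hdist_glue2[OF a a, of a b] a b by (simp add: retract_H hub_H hdist_self)
  moreover have "dmat a a a b * x b \<le> (\<Sum>v\<in>W. dmat a a a v * x v)"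
    using b nonneg by (intro member_le_sum finite_W) simp_all
  ultimately show ?thesis using eig a unfolding eigenpair_def by simp
qed

lemma sum_shift_twins:
  assumes u: "u1 \<in> VH" "u2 \<in> VH" and deg: "hdeg EH u1 = 1" "hdeg EH u2 = 1"
    and adj: "hdist EH u1 u2 = 1"
  shows "(\<Sum>q\<in>VH. shift u1 u2 q * x q) = x u1 - x u2"
proof -
  have "u1 \<noteq> u2" using adj by (auto simp: hdist_self)
  have shift: "shift u1 u2 q = (if q = u1 then 1 else 0) - (if q = u2 then 1 else 0)" if q: "q \<in> VH" for q
  proof -
    have "hdist EH u2 u1 = 1" using adj hdist_commute[OF H(2) u] by simp
    then show ?thesis
      using hdist_twins[OF H(2) u deg adj q] \<open>u1 \<noteq> u2\<close> unfolding shift_H[OF q]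
      by (auto simp: hdist_self adj)
  qed
  have "(\<Sum>q\<in>VH. shift u1 u2 q * x q)
      = (\<Sum>q\<in>VH. (if q = u1 then x q else 0) - (if q = u2 then x q else 0))"
    by (intro sum.cong) (simp_all add: shift)
  then have "(\<Sum>q\<in>VH. shift u1 u2 q * x q)
      = (\<Sum>q\<in>VH. if q = u1 then x q else 0) - (\<Sum>q\<in>VH. if q = u2 then x q else 0)"
    by (simp add: sum_subtractf)
  then show ?thesis using u H(1) unfolding hypergraph_def by simp
qed

lemma dist_rho_move_second_ge:
  assumes a: "a \<in> VH" and b: "b \<in> VH"
  defines "x \<equiv> perron (glue2_V VH V1 r1 a V2 r2 a) (glue2_E EH E1 r1 a E2 r2 a)"
  shows "dist_rho (glue2_V VH V1 r1 a V2 r2 a) (glue2_E EH E1 r1 a E2 r2 a)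
      + 2 * (\<Sum>p\<in>V2 - {r2}. x p) * (\<Sum>q\<in>VH \<union> (V1 - {r1}). shift a b q * x q)
    \<le> dist_rho (glue2_V VH V1 r1 a V2 r2 b) (glue2_E EH E1 r1 a E2 r2 b)"
proof -
  note x = glue2_perron[OF a a, folded x_def]
  show ?thesis
    using quad_form_move_second[OF a b, of x] eigenpair_quad_form[OF x(1)] x(3)
      glue2_perron(4)[OF a b, of x] by simp
qed

lemma sum_shift_ge_if_heavy:
  assumes u: "u1 \<in> VH" "u2 \<in> VH" and x: "\<And>v. v \<in> W \<Longrightarrow> 0 \<le> x v"
    and heavy: "(\<Sum>q\<in>VH. x q) \<le> (\<Sum>q\<in>V1 - {r1}. x q) + x u1"
  shows "real (hdist EH u2 u1) * x u1 \<le> (\<Sum>q\<in>VH \<union> (V1 - {r1}). shift u1 u2 q * x q)"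
proof -
  define t where "t = real (hdist EH u2 u1)"
  \<comment> \<open>no vertex of \<open>H\<close> is nearer to \<open>u\<^sub>2\<close> than to \<open>u\<^sub>1\<close> by more than \<open>t\<close>\<close>
  have "t * (if q = u1 then 1 else -1) \<le> shift u1 u2 q" if q: "q \<in> VH" for q
  proof -
    have "hdist EH u1 q \<le> hdist EH u1 u2 + hdist EH u2 q" by (rule hdist_triangle[OF H(2) u q])
    then show ?thesis
      using q hdist_commute[OF H(2) u] unfolding shift_H[OF q] t_def by (auto simp: hdist_self)
  qed
  then have "(\<Sum>q\<in>VH. t * (if q = u1 then 1 else -1) * x q) \<le> (\<Sum>q\<in>VH. shift u1 u2 q * x q)"
    using x by (intro sum_mono mult_right_mono) auto
  moreover have "(\<Sum>q\<in>VH. t * (if q = u1 then 1 else -1) * x q) = t * (2 * x u1 - (\<Sum>q\<in>VH. x q))"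
  proof -
    have "(\<Sum>q\<in>VH. t * (if q = u1 then 1 else -1) * x q)
        = (\<Sum>q\<in>VH. t * (2 * (if q = u1 then x q else 0) - x q))"
      by (intro sum.cong) auto
    also have "\<dots> = t * (2 * (\<Sum>q\<in>VH. if q = u1 then x q else 0) - (\<Sum>q\<in>VH. x q))"
      by (simp add: sum_subtractf sum_distrib_left right_diff_distrib)
    finally show ?thesis using u(1) H(1) unfolding hypergraph_def by simp
  qed
  moreover have "(\<Sum>q\<in>V1 - {r1}. shift u1 u2 q * x q) = t * (\<Sum>q\<in>V1 - {r1}. x q)"
    using shift_pendant u(1) unfolding t_def by (simp add: sum_distrib_left)
  moreover have "0 \<le> t * ((\<Sum>q\<in>V1 - {r1}. x q) + x u1 - (\<Sum>q\<in>VH. x q))"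
    using heavy unfolding t_def by simp
  ultimately show ?thesis unfolding sum_H_V1 t_def[symmetric] by (simp add: algebra_simps)
qed

theorem dist_rho_less_if_heavy:
  assumes u: "u1 \<in> VH" "u2 \<in> VH" "u1 \<noteq> u2" and "E2 \<noteq> {}"
    and heavy: "sigma (glue2_V VH V1 r1 u1 V2 r2 u1) (glue2_E EH E1 r1 u1 E2 r2 u1) (V1 - {r1})
        + perron (glue2_V VH V1 r1 u1 V2 r2 u1) (glue2_E EH E1 r1 u1 E2 r2 u1) u1
      \<ge> sigma (glue2_V VH V1 r1 u1 V2 r2 u1) (glue2_E EH E1 r1 u1 E2 r2 u1) VH"
  shows "dist_rho (glue2_V VH V1 r1 u1 V2 r2 u1) (glue2_E EH E1 r1 u1 E2 r2 u1)
    < dist_rho (glue2_V VH V1 r1 u1 V2 r2 u2) (glue2_E EH E1 r1 u1 E2 r2 u2)"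
proof -
  define x where "x = perron (glue2_V VH V1 r1 u1 V2 r2 u1) (glue2_E EH E1 r1 u1 E2 r2 u1)"
  note x = glue2_perron(2)[OF u(1,1), folded x_def]
  have "0 < 2 * (\<Sum>p\<in>V2 - {r2}. x p) * (real (hdist EH u2 u1) * x u1)"
    using sum_nonroot_pos[OF G2(1) \<open>E2 \<noteq> {}\<close>, of r2 x] hdist_pos[OF H(2) u(2,1)] u x by simp
  also have "\<dots> \<le> 2 * (\<Sum>p\<in>V2 - {r2}. x p) * (\<Sum>q\<in>VH \<union> (V1 - {r1}). shift u1 u2 q * x q)"
    using sum_shift_ge_if_heavy[OF u(1,2), of x] x heavy unfolding sigma_def x_def[symmetric]
    by (intro mult_left_mono) (auto intro: less_imp_le sum_nonneg)
  finally show ?thesis using dist_rho_move_second_ge[OF u(1,2)] unfolding x_def by linarith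
qed

text \<open>Exchanging the entries of \<open>x\<close> at the twins \<open>u\<^sub>1\<close>, \<open>u\<^sub>2\<close> turns moving \<open>G\<^sub>2\<close> to \<open>u\<^sub>2\<close>
  into moving \<open>G\<^sub>1\<close> there instead.\<close>
lemma dist_rho_move_first_ge_if_twins:
  assumes u: "u1 \<in> VH" "u2 \<in> VH" and deg: "hdeg EH u1 = 1" "hdeg EH u2 = 1"
    and adj: "hdist EH u1 u2 = 1"
  defines "x \<equiv> perron (glue2_V VH V1 r1 u1 V2 r2 u1) (glue2_E EH E1 r1 u1 E2 r2 u1)"
  shows "dist_rho (glue2_V VH V1 r1 u1 V2 r2 u1) (glue2_E EH E1 r1 u1 E2 r2 u1)
      + 2 * (\<Sum>p\<in>V1 - {r1}. x p) * ((\<Sum>p\<in>V2 - {r2}. x p) + x u1 - x u2)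
    \<le> dist_rho (glue2_V VH V1 r1 u1 V2 r2 u2) (glue2_E EH E1 r1 u1 E2 r2 u2)"
proof -
  interpret swapped: pendant_pair VH EH V2 E2 r2 V1 E1 r1
    using H G1 G2 disj by unfold_locales blast+
  note x = glue2_perron[OF u(1,1), folded x_def]
  have W: "VH \<union> (V2 - {r2}) \<union> (V1 - {r1}) = W" by blast
  have "(\<Sum>q\<in>V2 - {r2}. swapped.shift u1 u2 q * x q) = (\<Sum>p\<in>V2 - {r2}. x p)"
    using swapped.shift_pendant u(1) adj hdist_commute[OF H(2) u] by (intro sum.cong) simp_all
  then have "(\<Sum>q\<in>VH \<union> (V2 - {r2}). swapped.shift u1 u2 q * x q) = (\<Sum>p\<in>V2 - {r2}. x p) + x u1 - x u2"
    using swapped.sum_shift_twins[OF u deg adj, of x] unfolding swapped.sum_H_V1 by simp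
  then have "quad_form W (dmat u2 u1) x = dist_rho (glue2_V VH V1 r1 u1 V2 r2 u1) (glue2_E EH E1 r1 u1 E2 r2 u1)
      + 2 * (\<Sum>p\<in>V1 - {r1}. x p) * ((\<Sum>p\<in>V2 - {r2}. x p) + x u1 - x u2)"
    using swapped.quad_form_move_second[OF u(1,2), of x] eigenpair_quad_form[OF x(1)] x(3)
    unfolding W glue2_E_commute[of EH E2 r2] by (simp add: glue2_E_commute)
  moreover have "quad_form W (dmat u1 u2) (\<lambda>p. x (transpose u1 u2 p)) = quad_form W (dmat u2 u1) x"
    using quad_form_transpose[OF u hdist_transpose_twins[OF H(2) u deg adj]] .
  moreover have "quad_form W (dmat u1 u2) (\<lambda>p. x (transpose u1 u2 p))
      \<le> dist_rho (glue2_V VH V1 r1 u1 V2 r2 u2) (glue2_E EH E1 r1 u1 E2 r2 u2)"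
    using glue2_perron(4)[OF u(1,2), of "\<lambda>p. x (transpose u1 u2 p)"] x(3)
      sum_sq_reindex[OF bij_betw_transpose_W[OF u], of x] by simp
  ultimately show ?thesis by simp
qed

lemma less_if_twin_bounds:
  fixes lam rho S1 S2 a b :: real
  assumes pos: "0 < S1" "0 < S2" "0 < a"
    and F1: "lam + 2 * S1 * (S2 + a - b) \<le> rho" and F2: "lam + 2 * S2 * (S1 + a - b) \<le> rho"
    and E: "lam * (b - a) = S1 + S2 + (a - b)" and G: "b \<le> lam * a"
  shows "lam < rho"
proof (rule ccontr)
  assume "\<not> lam < rho"
  then have "S2 * (S1 - (b - a)) \<le> 0" "S1 * (S2 - (b - a)) \<le> 0"
    using F1 F2 by (simp_all add: algebra_simps)
  then have "S1 \<le> b - a" "S2 \<le> b - a"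
    using pos by (simp_all add: mult_le_0_iff)
  with E pos have "(lam - 1) * (b - a) \<le> 0" "0 < b - a" by (simp_all add: algebra_simps)
  then have "lam \<le> 1" by (simp add: mult_le_0_iff)
  then have "lam * a \<le> a" using mult_right_mono[of lam 1 a] pos by simp
  with G \<open>0 < b - a\<close> show False by simp
qed

theorem dist_rho_less_if_twins:
  assumes u: "u1 \<in> VH" "u2 \<in> VH" and deg: "hdeg EH u1 = 1" "hdeg EH u2 = 1"
    and adj: "hdist EH u1 u2 = 1" and "E1 \<noteq> {}" "E2 \<noteq> {}"
  shows "dist_rho (glue2_V VH V1 r1 u1 V2 r2 u1) (glue2_E EH E1 r1 u1 E2 r2 u1)
    < dist_rho (glue2_V VH V1 r1 u1 V2 r2 u2) (glue2_E EH E1 r1 u1 E2 r2 u2)"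
    (is "?lam < ?rho")
proof -
  define x where "x = perron (glue2_V VH V1 r1 u1 V2 r2 u1) (glue2_E EH E1 r1 u1 E2 r2 u1)"
  define S1 where "S1 = (\<Sum>p\<in>V1 - {r1}. x p)"
  define S2 where "S2 = (\<Sum>p\<in>V2 - {r2}. x p)"
  note x = glue2_perron[OF u(1,1), folded x_def]
  have adj': "hdist EH u2 u1 = 1" using adj hdist_commute[OF H(2) u] by simp
  have pos: "0 < S1" "0 < S2" "0 < x u1"
    using sum_nonroot_pos[OF G1(1) \<open>E1 \<noteq> {}\<close>, of r1 x]
      sum_nonroot_pos[OF G2(1) \<open>E2 \<noteq> {}\<close>, of r2 x] x(2) u(1) unfolding S1_def S2_def by auto
  have F1: "?lam + 2 * S1 * (S2 + x u1 - x u2) \<le> ?rho"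
    using dist_rho_move_first_ge_if_twins[OF u deg adj] unfolding x_def S1_def S2_def .
  have "(\<Sum>q\<in>V1 - {r1}. shift u1 u2 q * x q) = S1"
    unfolding S1_def using shift_pendant u(1) adj' by (intro sum.cong) simp_all
  then have "(\<Sum>q\<in>VH \<union> (V1 - {r1}). shift u1 u2 q * x q) = S1 + x u1 - x u2"
    using sum_shift_twins[OF u deg adj, of x] unfolding sum_H_V1 by simp
  then have F2: "?lam + 2 * S2 * (S1 + x u1 - x u2) \<le> ?rho"
    using dist_rho_move_second_ge[OF u(1,2)] unfolding x_def S2_def by simp
  have "(\<Sum>v\<in>W. shift u1 u2 v * x v) = S1 + S2 + (x u1 - x u2)"
    using sum_shift_twins[OF u deg adj, of x] shift_pendant u(1) adj'
    unfolding sum_W S1_def S2_def by (simp add: sum_distrib_left[symmetric])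
  then have E: "?lam * (x u2 - x u1) = S1 + S2 + (x u1 - x u2)"
    using eigen_row_diff[OF u(1,2) x(1)] by simp
  have G: "x u2 \<le> ?lam * x u1"
    using eigen_row_ge[OF u(1,2) x(1)] x(2) adj by (simp add: less_imp_le)
  show ?thesis by (rule less_if_twin_bounds[OF pos F1 F2 E G])
qed
end

theorem lemma4:
  fixes VH V1 V2 :: "'a set" and EH E1 E2 :: "'a set set" and u1 u2 r1 r2 :: 'a
  assumes H: "hypergraph VH EH" "hconnected VH EH"
    and u: "u1 \<in> VH" "u2 \<in> VH" "u1 \<noteq> u2"
    and G1: "hypergraph V1 E1" "hconnected V1 E1" "r1 \<in> V1" "E1 \<noteq> {}"
    and G2: "hypergraph V2 E2" "hconnected V2 E2" "r2 \<in> V2" "E2 \<noteq> {}"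
    and disj: "VH \<inter> V1 = {}" "VH \<inter> V2 = {}" "V1 \<inter> V2 = {}"
    and cond: "(hdeg EH u1 = 1 \<and> hdeg EH u2 = 1 \<and> hdist EH u1 u2 = 1) \<or>
               sigma (glue2_V VH V1 r1 u1 V2 r2 u1) (glue2_E EH E1 r1 u1 E2 r2 u1) (V1 - {r1})
                 + perron (glue2_V VH V1 r1 u1 V2 r2 u1) (glue2_E EH E1 r1 u1 E2 r2 u1) u1
               \<ge> sigma (glue2_V VH V1 r1 u1 V2 r2 u1) (glue2_E EH E1 r1 u1 E2 r2 u1) VH"
  shows "dist_rho (glue2_V VH V1 r1 u1 V2 r2 u2) (glue2_E EH E1 r1 u1 E2 r2 u2)
         > dist_rho (glue2_V VH V1 r1 u1 V2 r2 u1) (glue2_E EH E1 r1 u1 E2 r2 u1)"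
proof -
  interpret pendant_pair VH EH V1 E1 r1 V2 E2 r2
    using H G1 G2 disj by unfold_locales
  from cond show ?thesis
  proof
    assume "hdeg EH u1 = 1 \<and> hdeg EH u2 = 1 \<and> hdist EH u1 u2 = 1"
    then show ?thesis using dist_rho_less_if_twins u(1,2) \<open>E1 \<noteq> {}\<close> \<open>E2 \<noteq> {}\<close> by blast
  next
    assume "sigma (glue2_V VH V1 r1 u1 V2 r2 u1) (glue2_E EH E1 r1 u1 E2 r2 u1) (V1 - {r1})
        + perron (glue2_V VH V1 r1 u1 V2 r2 u1) (glue2_E EH E1 r1 u1 E2 r2 u1) u1
      \<ge> sigma (glue2_V VH V1 r1 u1 V2 r2 u1) (glue2_E EH E1 r1 u1 E2 r2 u1) VH"
    then show ?thesis using dist_rho_less_if_heavy u \<open>E2 \<noteq> {}\<close> by blast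
  qed
qed

end
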